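(* Let $(x_0,x_1)$ be a state of nonnegative integers with $ch(x_0,x_1)\geq 1$ and $x_1\geq x_0-1\geq 1$. Then there exists a legal question $(a_0,a_1)$ such that, whichever answer Carole gives, the next state $(y_0,y_1)$ satisfies (i) $\lfloor x_0/2\rfloor\leq y_0\leq\lceil x_0/2\rceil$; (ii) $y_1\geq y_0-1$; (iii) $ch(y_0,y_1)\geq ch(x_0,x_1)-1$.
   Context: Liar game with $1$ lie: a state is a pair $(x_0,x_1)$ of nonnegative integers; a legal question is a pair $(a_0,a_1)$ of integers with $0\leq a_i\leq x_i$; after Carole's answer Y the next state is $(a_0,\,a_1+x_0-a_0)$, after N it is $(x_0-a_0,\,x_1-a_1+a_0)$. Weight: $wt_q(x_0,x_1)=(q+1)x_0+x_1$. The character $ch(x_0,x_1)$ is the maximum integer $q\geq 0$ such that $wt_q(x_0,x_1)\geq 2^q$. *)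

theory Defs
  imports Main
begin

type_synonym state = "nat \<times> nat"

definition wt :: "nat \<Rightarrow> state \<Rightarrow> nat" where
  "wt q s = (q + 1) * fst s + snd s"

text \<open>Character: the maximum q such that wt_q(x) \<ge> 2^q (the set is finite since 2^q grows faster).\<close>
definition ch :: "state \<Rightarrow> nat" where
  "ch s = (GREATEST q. wt q s \<ge> 2 ^ q)"

definition legal :: "state \<Rightarrow> nat \<times> nat \<Rightarrow> bool" where
  "legal s a \<longleftrightarrow> fst a \<le> fst s \<and> snd a \<le> snd s"

definition yes_state :: "state \<Rightarrow> nat \<times> nat \<Rightarrow> state" where
  "yes_state s a = (fst a, snd a + fst s - fst a)"

definition no_state :: "state \<Rightarrow> nat \<times> nat \<Rightarrow> state" where
  "no_state s a = (fst s - fst a, snd s - snd a + fst a)"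

end

theory Submission
  imports Defs
begin

text \<open>
  Weight is conserved: for every legal question the two possible next states satisfy
  \<open>wt\<^sub>q\<^sub>-\<^sub>1(yes) + wt\<^sub>q\<^sub>-\<^sub>1(no) = wt\<^sub>q(x)\<close>. If the question splits \<open>x\<^sub>0\<close> in half and makes the
  two children's weights differ by at most one, each child keeps weight at least
  \<open>2\<^sup>q\<^sup>-\<^sup>1\<close> when \<open>wt\<^sub>q(x) \<ge> 2\<^sup>q\<close>, so its character is at least \<open>q - 1\<close>. The weight difference
  is \<open>(q - 1)(2a\<^sub>0 - x\<^sub>0) + 2a\<^sub>1 - x\<^sub>1\<close>: for even \<open>x\<^sub>0\<close> halve both components; for odd
  \<open>x\<^sub>0\<close> take \<open>a\<^sub>0 = (x\<^sub>0 + 1)/2\<close> and compensate with \<open>a\<^sub>1 \<approx> (x\<^sub>1 - q + 1)/2\<close>, which is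
  possible because \<open>x\<^sub>1 \<ge> x\<^sub>0 - 1\<close> forces \<open>q \<le> x\<^sub>1 + 2\<close>.
\<close>

lemma square_le_pow2: "4 \<le> q \<Longrightarrow> q * q \<le> (2::nat) ^ q"
proof (induction q rule: dec_induct)
  case base
  then show ?case by simp
next
  case (step n)
  have "4 * n \<le> n * n" using \<open>4 \<le> n\<close> by (rule mult_le_mono1)
  moreover have "Suc n * Suc n = n * n + 2 * n + 1" by simp
  ultimately have "Suc n * Suc n \<le> 2 * (n * n)" using \<open>4 \<le> n\<close> by linarith
  then show ?case using step.IH by simp
qed

lemma wt_lt_pow2:
  assumes "fst s + snd s + 4 \<le> q"
  shows "wt q s < 2 ^ q"
proof -
  let ?m = "fst s + snd s"
  have "wt q s \<le> (q + 1) * ?m" by (simp add: wt_def algebra_simps)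
  also have "\<dots> < (?m + 4) * q" using assms by (simp add: algebra_simps)
  also have "\<dots> \<le> q * q" using assms by (rule mult_le_mono1)
  also have "\<dots> \<le> 2 ^ q" using assms by (intro square_le_pow2) simp
  finally show ?thesis .
qed

lemma pow2_le_wt_bounded: "2 ^ q \<le> wt q s \<Longrightarrow> q \<le> fst s + snd s + 4"
  using wt_lt_pow2[of s q] by linarith

lemma pow2_le_wt_ch: "2 ^ k \<le> wt k s \<Longrightarrow> 2 ^ ch s \<le> wt (ch s) s"
  unfolding ch_def by (rule GreatestI_nat[where b = "fst s + snd s + 4"]) (auto dest: pow2_le_wt_bounded)

lemma le_ch: "2 ^ k \<le> wt k s \<Longrightarrow> k \<le> ch s"
  unfolding ch_def by (rule Greatest_le_nat[where b = "fst s + snd s + 4"]) (auto dest: pow2_le_wt_bounded)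

lemma pow2_le_wt_le_snd:
  assumes "x0 \<le> x1 + 1" and "2 ^ q \<le> wt q (x0, x1)"
  shows "q \<le> x1 + 2"
proof (rule ccontr)
  assume "\<not> q \<le> x1 + 2"
  then have "x1 + 3 \<le> q" by simp
  then obtain r where q: "q = x1 + 3 + r" using le_Suc_ex by blast
  have "2 ^ q \<le> (q + 1) * (x1 + 1) + x1"
    using assms mult_le_mono2[of x0 "x1 + 1" "q + 1"] by (simp add: wt_def)
  \<comment> \<open>the slack 5 also excludes \<open>q = 3\<close>, the one case with \<open>q * q > 2 ^ q\<close>\<close>
  moreover have "(q + 1) * (x1 + 1) + x1 + 5 \<le> q * q" unfolding q by (simp add: algebra_simps)
  ultimately have "2 ^ q + 5 \<le> q * q" by linarith
  moreover have "3 \<le> q" using q by simp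
  ultimately show False using square_le_pow2[of q] by (cases "q = 3") auto
qed

lemma of_nat_wt: "int (wt q (y0, y1)) = (int q + 1) * int y0 + int y1"
  by (simp add: wt_def algebra_simps)

lemma wt_yes_add_no:
  assumes "legal (x0, x1) (a0, a1)"
  shows "wt q (yes_state (x0, x1) (a0, a1)) + wt q (no_state (x0, x1) (a0, a1)) = wt (Suc q) (x0, x1)"
proof -
  have "int (wt q (yes_state (x0, x1) (a0, a1))) + int (wt q (no_state (x0, x1) (a0, a1)))
      = int (wt (Suc q) (x0, x1))"
    using assms by (simp add: legal_def yes_state_def no_state_def of_nat_wt of_nat_diff algebra_simps)
  then show ?thesis by linarith
qed

lemma wt_yes_diff_no:
  assumes "legal (x0, x1) (a0, a1)"
  shows "int (wt q (yes_state (x0, x1) (a0, a1))) - int (wt q (no_state (x0, x1) (a0, a1)))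
    = int q * (2 * int a0 - int x0) + 2 * int a1 - int x1"
  using assms by (simp add: legal_def yes_state_def no_state_def of_nat_wt of_nat_diff algebra_simps)

lemma balanced_question_exists:
  assumes "odd x0 \<Longrightarrow> q \<le> x1 + 1"
  shows "\<exists>a0 a1. legal (x0, x1) (a0, a1) \<and> x0 div 2 \<le> a0 \<and> a0 \<le> (x0 + 1) div 2
    \<and> \<bar>int (wt q (yes_state (x0, x1) (a0, a1))) - int (wt q (no_state (x0, x1) (a0, a1)))\<bar> \<le> 1"
proof (cases "even x0")
  case True
  then show ?thesis
    by (intro exI[of _ "x0 div 2"] exI[of _ "x1 div 2"]) (auto simp: wt_yes_diff_no legal_def)
next
  case False
  then show ?thesis
    using assms
    by (intro exI[of _ "(x0 + 1) div 2"] exI[of _ "(x1 + 1 - q) div 2"])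
      (auto simp: wt_yes_diff_no legal_def elim!: oddE)
qed

lemma balanced_sum_half_le:
  fixes A B c :: nat
  assumes "2 * c \<le> A + B" and "\<bar>int A - int B\<bar> \<le> 1"
  shows "c \<le> A"
  using assms by linarith

theorem lemma13:
  fixes x0 x1 :: nat
  assumes "ch (x0, x1) \<ge> 1"
    and "int x1 \<ge> int x0 - 1" and "int x0 - 1 \<ge> 1"
  shows "\<exists>a. legal (x0, x1) a \<and>
    (\<forall>y \<in> {yes_state (x0, x1) a, no_state (x0, x1) a}.
        x0 div 2 \<le> fst y \<and> fst y \<le> (x0 + 1) div 2
      \<and> int (snd y) \<ge> int (fst y) - 1
      \<and> int (ch y) \<ge> int (ch (x0, x1)) - 1)"
proof -
  obtain q where q: "ch (x0, x1) = Suc q" using assms(1) by (metis Suc_le_D One_nat_def)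
  have "2 ^ 0 \<le> wt 0 (x0, x1)" using assms(3) by (simp add: wt_def)
  then have wt_x: "2 ^ Suc q \<le> wt (Suc q) (x0, x1)" unfolding q[symmetric] by (rule pow2_le_wt_ch)
  have "Suc q \<le> x1 + 2" using assms(2) wt_x by (intro pow2_le_wt_le_snd) simp_all
  then obtain a0 a1 where a: "legal (x0, x1) (a0, a1)" "x0 div 2 \<le> a0" "a0 \<le> (x0 + 1) div 2"
    and balanced: "\<bar>int (wt q (yes_state (x0, x1) (a0, a1))) - int (wt q (no_state (x0, x1) (a0, a1)))\<bar> \<le> 1"
    using balanced_question_exists[of x0 q x1] by auto
  have sum: "2 * 2 ^ q \<le> wt q (yes_state (x0, x1) (a0, a1)) + wt q (no_state (x0, x1) (a0, a1))"
    using wt_x wt_yes_add_no[OF a(1)] by simp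
  have "q \<le> ch (yes_state (x0, x1) (a0, a1))"
    using balanced_sum_half_le[OF sum balanced] by (rule le_ch)
  moreover have "q \<le> ch (no_state (x0, x1) (a0, a1))"
    using balanced_sum_half_le[of "2 ^ q", OF _ balanced[unfolded abs_minus_commute]] sum by (intro le_ch) simp
  ultimately show ?thesis
    using a by (intro exI[of _ "(a0, a1)"]) (auto simp: q legal_def yes_state_def no_state_def)
qed

end
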